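(* Let $L^{(k)}\subset\mathbb R^n$, $k\in\mathbb N$, be lattices such that the flat tori $\mathbb R^n/L^{(k)}$ have uniformly bounded diameter and $\mathrm{Vol}(\mathbb R^n/L^{(k)})\to0$ as $k\to\infty$. Then, after passing to a subsequence, there exist an integer $0\le m<n$ and, for each $k$, a $\mathbb Z$-basis $\{v^{(k)}_1,\dots,v^{(k)}_n\}$ of $L^{(k)}$ such that: (i) if $m\ge1$, the limits $w_j=\lim_{k\to\infty}v_j^{(k)}$ exist for $j=1,\dots,m$ and $w_1,\dots,w_m$ are linearly independent; (ii) $\lim_{k\to\infty}v^{(k)}_j=0$ for $j=m+1,\dots,n$.
   Context: A lattice in $\mathbb R^n$ is a discrete subgroup spanning $\mathbb R^n$; $\mathbb R^n/L$ carries the flat metric induced from the Euclidean metric, and its volume is the covolume of $L$. *)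

theory Defs
  imports "HOL-Analysis.Analysis"
begin

definition is_lattice :: "(real^'n) set \<Rightarrow> bool" where
  "is_lattice L \<longleftrightarrow>
     0 \<in> L \<and> (\<forall>x\<in>L. \<forall>y\<in>L. x + y \<in> L) \<and> (\<forall>x\<in>L. - x \<in> L) \<and>
     (\<exists>e>0. \<forall>x\<in>L. x \<noteq> 0 \<longrightarrow> e \<le> norm x) \<and>
     span L = UNIV"

text \<open>A Z-basis v_0,...,v_{n-1} of L (indices shifted by one w.r.t. the paper).\<close>
definition lattice_basis :: "(real^'n) set \<Rightarrow> (nat \<Rightarrow> real^'n) \<Rightarrow> bool" where
  "lattice_basis L b \<longleftrightarrow>
     inj_on b {..<CARD('n)} \<and> independent (b ` {..<CARD('n)}) \<and>
     L = {(\<Sum>j<CARD('n). of_int (c j) *\<^sub>R b j) | c. True}"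

definition torus_dist :: "(real^'n) set \<Rightarrow> real^'n \<Rightarrow> real^'n \<Rightarrow> real" where
  "torus_dist L x y = infdist (x - y) L"

definition torus_volume :: "(real^'n) set \<Rightarrow> real" where
  "torus_volume L =
     (let b = (SOME b. lattice_basis L b) in
      measure lebesgue {(\<Sum>j<CARD('n). t j *\<^sub>R b j) | t. \<forall>j<CARD('n). 0 \<le> t j \<and> t j < 1})"

end

theory Submission
  imports Defs
begin

text \<open>For each lattice take a basis \<open>b 0, \<dots>, b (n - 1)\<close> reduced in the sense of
  Korkine--Zolotarev. Consecutive Gram--Schmidt lengths of such a basis decrease by at most a
  factor 2, every \<open>b j\<close> is bounded by a constant times the last Gram--Schmidt length, and that
  length is at most twice the diameter of the torus. So the bases are uniformly bounded and a
  subsequence converges, say \<open>b j \<longlonglongrightarrow> \<beta> j\<close>. If \<open>\<beta> i\<close> lies in the span of the earlier limits,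
  then \<open>b i\<close> minus the corresponding combination tends to \<open>0\<close>; it dominates the Gram--Schmidt
  component of \<open>b i\<close>, hence all of \<open>b 0, \<dots>, b i\<close>, and \<open>\<beta> 0 = \<dots> = \<beta> i = 0\<close>. Thus the limits
  vanish up to some index and are independent from there on. Finally \<open>\<beta> 0 = 0\<close>: otherwise the
  shortest lattice vectors stay long, and a packing argument bounds the covolumes from below.
  Reversing the order of the bases gives the theorem.\<close>

section \<open>Orthogonal components\<close>

definition perp :: "'a::euclidean_space set \<Rightarrow> 'a \<Rightarrow> 'a" where
  "perp S x = x - (SOME y. y \<in> span S \<and> (\<forall>w\<in>span S. orthogonal (x - y) w))"

lemma perp_span: "x - perp S x \<in> span S"
  and perp_orthogonal: "w \<in> span S \<Longrightarrow> orthogonal (perp S x) w"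
proof -
  have "\<exists>y. y \<in> span S \<and> (\<forall>w\<in>span S. orthogonal (x - y) w)"
    by (rule orthogonal_subspace_decomp_exists[of S x]) force
  from someI_ex[OF this]
  show "x - perp S x \<in> span S" "w \<in> span S \<Longrightarrow> orthogonal (perp S x) w"
    unfolding perp_def by auto
qed

lemma perp_unique:
  assumes "y \<in> span S" "\<And>w. w \<in> span S \<Longrightarrow> orthogonal z w"
  shows "perp S (y + z) = z"
proof -
  let ?p = "perp S (y + z)"
  have "z - ?p = ((y + z) - ?p) - y" by simp
  also have "\<dots> \<in> span S" by (rule span_diff[OF perp_span assms(1)])
  finally have sp: "z - ?p \<in> span S" .
  have "orthogonal (z - ?p) (z - ?p)"
    using assms(2)[OF sp] perp_orthogonal[OF sp, of "y + z"]
    by (simp add: orthogonal_def inner_diff_left)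
  then show ?thesis by (simp add: orthogonal_def)
qed

lemma perp_self: "(\<And>w. w \<in> span S \<Longrightarrow> orthogonal z w) \<Longrightarrow> perp S z = z"
  using perp_unique[of 0 S z] by (simp add: span_zero)

lemma perp_eq_0_iff: "perp S x = 0 \<longleftrightarrow> x \<in> span S"
  using perp_span[of x S] perp_unique[of x S 0] by (auto simp: orthogonal_def)

lemma perp_add: "perp S (x + y) = perp S x + perp S y"
proof -
  have "x + y = ((x - perp S x) + (y - perp S y)) + (perp S x + perp S y)" by simp
  moreover have "(x - perp S x) + (y - perp S y) \<in> span S"
    using perp_span span_add by blast
  moreover have "orthogonal (perp S x + perp S y) w" if "w \<in> span S" for w
    using perp_orthogonal[OF that] by (simp add: orthogonal_def inner_add_left)
  ultimately show ?thesis by (metis perp_unique)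
qed

lemma perp_scaleR: "perp S (c *\<^sub>R x) = c *\<^sub>R perp S x"
proof -
  have "c *\<^sub>R x = c *\<^sub>R (x - perp S x) + c *\<^sub>R perp S x" by (simp add: algebra_simps)
  moreover have "c *\<^sub>R (x - perp S x) \<in> span S" using perp_span span_mul by blast
  moreover have "orthogonal (c *\<^sub>R perp S x) w" if "w \<in> span S" for w
    using perp_orthogonal[OF that] by (simp add: orthogonal_def)
  ultimately show ?thesis by (metis perp_unique)
qed

lemma perp_diff: "perp S (x - y) = perp S x - perp S y"
  using perp_add[of S x "-y"] perp_scaleR[of S "-1" y] by simp

lemma perp_diff_span: "v \<in> span S \<Longrightarrow> perp S (x - v) = perp S x"
  by (simp add: perp_diff perp_eq_0_iff)

lemma norm_perp_le: "norm (perp S x) \<le> norm x"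
proof -
  have "orthogonal (x - perp S x) (perp S x)"
    using perp_orthogonal[OF perp_span] by (simp add: orthogonal_commute)
  then have "(norm x)\<^sup>2 = (norm (x - perp S x))\<^sup>2 + (norm (perp S x))\<^sup>2"
    using norm_add_Pythagorean by fastforce
  then show ?thesis
    by (metis le_add_same_cancel2 norm_ge_zero power2_le_imp_le zero_le_power2)
qed

section \<open>Lattices\<close>

lemma lattice_zero: "is_lattice L \<Longrightarrow> 0 \<in> L"
  and lattice_add: "is_lattice L \<Longrightarrow> x \<in> L \<Longrightarrow> y \<in> L \<Longrightarrow> x + y \<in> L"
  and lattice_uminus: "is_lattice L \<Longrightarrow> x \<in> L \<Longrightarrow> - x \<in> L"
  and lattice_separated: "is_lattice L \<Longrightarrow> \<exists>e>0. \<forall>x\<in>L. x \<noteq> 0 \<longrightarrow> e \<le> norm x"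
  and lattice_span_UNIV: "is_lattice L \<Longrightarrow> span L = UNIV"
  unfolding is_lattice_def by auto

lemma lattice_diff: "is_lattice L \<Longrightarrow> x \<in> L \<Longrightarrow> y \<in> L \<Longrightarrow> x - y \<in> L"
  by (metis diff_conv_add_uminus lattice_add lattice_uminus)

lemma lattice_of_int_scaleR:
  assumes L: "is_lattice L" and x: "x \<in> L"
  shows "of_int k *\<^sub>R x \<in> L"
proof -
  have nat: "of_nat m *\<^sub>R x \<in> L" for m
    by (induction m) (simp_all add: lattice_zero[OF L] lattice_add[OF L x] scaleR_add_left)
  show ?thesis
    using nat[of "nat k"] lattice_uminus[OF L nat[of "nat (- k)"]]
    by (cases "k \<ge> 0") simp_all
qed

lemma lattice_sum_of_int:
  "is_lattice L \<Longrightarrow> (\<And>l. l < i \<Longrightarrow> b l \<in> L) \<Longrightarrow> (\<Sum>l<(i::nat). of_int (c l) *\<^sub>R b l) \<in> L"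
  by (induction i) (simp_all add: lattice_zero lattice_add lattice_of_int_scaleR)

lemma finite_lattice_Int_cball:
  assumes L: "is_lattice L"
  shows "finite (L \<inter> cball 0 R)"
proof (rule ccontr)
  assume "infinite (L \<inter> cball 0 R)"
  then obtain x where "x islimpt (L \<inter> cball 0 R)"
    using bounded_infinite_imp_islimpt[of "L \<inter> cball 0 R" "L \<inter> cball 0 R"] by auto
  then have near: "\<And>d. d > 0 \<Longrightarrow> \<exists>y\<in>L. y \<noteq> x \<and> dist y x < d"
    by (auto simp: islimpt_approachable)
  obtain e where e: "e > 0" "\<forall>x\<in>L. x \<noteq> 0 \<longrightarrow> e \<le> norm x"
    using lattice_separated[OF L] by blast
  obtain y1 where y1: "y1 \<in> L" "y1 \<noteq> x" "dist y1 x < e/2" using near[of "e/2"] e by auto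
  obtain y2 where y2: "y2 \<in> L" "dist y2 x < dist y1 x" using near[of "dist y1 x"] y1 by auto
  have "norm (y1 - y2) < e"
    using y1 y2 dist_triangle[of y1 y2 x] by (simp add: dist_norm dist_commute norm_minus_commute)
  moreover have "y1 - y2 \<in> L" "y1 - y2 \<noteq> 0" using lattice_diff[OF L] y1 y2 by auto
  ultimately show False using e(2) by fastforce
qed

lemma span_image_lessThan_obtain_sum:
  "x \<in> span (f ` {..<i::nat}) \<Longrightarrow> \<exists>c. x = (\<Sum>l<i. c l *\<^sub>R f l)"
proof (induction i arbitrary: x)
  case (Suc i)
  have "f ` {..<Suc i} = insert (f i) (f ` {..<i})" by (simp add: lessThan_Suc)
  then obtain k where "x - k *\<^sub>R f i \<in> span (f ` {..<i})"
    using Suc.prems span_breakdown_eq by metis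
  then obtain c where c: "x - k *\<^sub>R f i = (\<Sum>l<i. c l *\<^sub>R f l)" using Suc.IH by blast
  have "(\<Sum>l<i. (c(i := k)) l *\<^sub>R f l) = (\<Sum>l<i. c l *\<^sub>R f l)"
    by (rule sum.cong) auto
  then have "x = (\<Sum>l<Suc i. (c(i := k)) l *\<^sub>R f l)"
    using c by (simp add: algebra_simps)
  then show ?case by blast
qed simp

lemma sum_scaleR_in_span_image: "(\<Sum>l<i. c l *\<^sub>R f l) \<in> span (f ` {..<i})"
  by (intro span_sum span_mul span_base) auto

lemma independent_if_not_in_span_prefix:
  fixes a i :: nat
  assumes "\<And>j. a \<le> j \<Longrightarrow> j < i \<Longrightarrow> f j \<notin> span (f ` {a..<j})"
  shows "independent (f ` {a..<i}) \<and> inj_on f {a..<i}"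
  using assms
proof (induction i)
  case (Suc i)
  show ?case
  proof (cases "a \<le> i")
    case True
    then have eq: "{a..<Suc i} = insert i {a..<i}" by auto
    have "f i \<notin> span (f ` {a..<i})" by (rule Suc.prems) (use True in simp_all)
    moreover have "independent (f ` {a..<i}) \<and> inj_on f {a..<i}"
      using Suc by simp
    ultimately show ?thesis
      unfolding eq by (auto simp: independent_insertI span_base)
  qed (simp add: independent_empty)
qed (simp add: independent_empty)

lemma span_image_lessThan_eq_UNIV:
  fixes b :: "nat \<Rightarrow> real^'n"
  assumes "inj_on b {..<CARD('n)}" "independent (b ` {..<CARD('n)})"
  shows "span (b ` {..<CARD('n)}) = UNIV"
proof -
  have "card (b ` {..<CARD('n)}) = dim (UNIV :: (real^'n) set)"
    using assms(1) by (simp add: card_image)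
  then show ?thesis
    using card_eq_dim[of "b ` {..<CARD('n)}" UNIV] assms(2) by auto
qed

section \<open>Korkine--Zolotarev reduced bases\<close>

definition gram_schmidt :: "(nat \<Rightarrow> 'a::euclidean_space) \<Rightarrow> nat \<Rightarrow> 'a" where
  "gram_schmidt b i = perp (b ` {..<i}) (b i)"

definition size_reduced :: "(nat \<Rightarrow> 'a::euclidean_space) \<Rightarrow> nat \<Rightarrow> 'a \<Rightarrow> bool" where
  "size_reduced b i x \<longleftrightarrow>
     (\<exists>c. x - perp (b ` {..<i}) x = (\<Sum>l<i. c l *\<^sub>R b l) \<and> (\<forall>l<i. \<bar>c l\<bar> \<le> 1/2))"

text \<open>A variant of Korkine--Zolotarev reduction at index \<open>j\<close>, in which size reduction is measured
  in the basis vectors \<open>b l\<close> rather than in their Gram--Schmidt vectors.\<close>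
definition kz_reduced_at :: "(real^'n) set \<Rightarrow> (nat \<Rightarrow> real^'n) \<Rightarrow> nat \<Rightarrow> bool" where
  "kz_reduced_at L b j \<longleftrightarrow> b j \<in> L \<and> b j \<notin> span (b ` {..<j}) \<and>
     (\<forall>x\<in>L. x \<notin> span (b ` {..<j}) \<longrightarrow> norm (gram_schmidt b j) \<le> norm (perp (b ` {..<j}) x)) \<and>
     size_reduced b j (b j)"

lemma kz_reduced_at_cong:
  assumes "\<And>l. l \<le> j \<Longrightarrow> b' l = b l"
  shows "kz_reduced_at L b' j = kz_reduced_at L b j"
proof -
  have "b' ` {..<j} = b ` {..<j}" using assms by (intro image_cong) auto
  moreover have "(\<Sum>l<j. c l *\<^sub>R b' l) = (\<Sum>l<j. c l *\<^sub>R b l)" for c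
    using assms by (intro sum.cong) auto
  ultimately show ?thesis
    using assms[of j] by (simp add: kz_reduced_at_def size_reduced_def gram_schmidt_def)
qed

lemma kz_reduced_at_fun_upd:
  "kz_reduced_at L (b(i := x)) i \<longleftrightarrow> x \<in> L \<and> x \<notin> span (b ` {..<i}) \<and>
     (\<forall>y\<in>L. y \<notin> span (b ` {..<i}) \<longrightarrow> norm (perp (b ` {..<i}) x) \<le> norm (perp (b ` {..<i}) y)) \<and>
     size_reduced b i x"
proof -
  have "(b(i := x)) ` {..<i} = b ` {..<i}" by (intro image_cong) auto
  moreover have "(\<Sum>l<i. c l *\<^sub>R (b(i := x)) l) = (\<Sum>l<i. c l *\<^sub>R b l)" for c
    by (intro sum.cong) auto
  ultimately show ?thesis by (simp add: kz_reduced_at_def size_reduced_def gram_schmidt_def)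
qed

lemma size_reduce_exists:
  assumes L: "is_lattice L" and bL: "\<And>l. l < i \<Longrightarrow> b l \<in> L" and y: "y \<in> L"
  shows "\<exists>y'\<in>L. perp (b ` {..<i}) y' = perp (b ` {..<i}) y \<and> size_reduced b i y'"
proof -
  let ?V = "b ` {..<i}"
  obtain c where c: "y - perp ?V y = (\<Sum>l<i. c l *\<^sub>R b l)"
    using span_image_lessThan_obtain_sum[OF perp_span] by blast
  define z where "z = (\<Sum>l<i. of_int (round (c l)) *\<^sub>R b l)"
  have yz: "y - z \<in> L" unfolding z_def by (intro lattice_diff[OF L y] lattice_sum_of_int[OF L bL])
  have p: "perp ?V (y - z) = perp ?V y"
    unfolding z_def by (rule perp_diff_span[OF sum_scaleR_in_span_image])
  have "(y - z) - perp ?V (y - z) = (y - perp ?V y) - z"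
    unfolding p by simp
  also have "\<dots> = (\<Sum>l<i. (c l - of_int (round (c l))) *\<^sub>R b l)"
    unfolding c z_def by (simp add: sum_subtractf scaleR_diff_left)
  finally have eq: "(y - z) - perp ?V (y - z) = (\<Sum>l<i. (c l - of_int (round (c l))) *\<^sub>R b l)" .
  have "\<bar>c l - of_int (round (c l))\<bar> \<le> 1/2" for l
    using of_int_round_abs_le[of "c l"] by (simp add: abs_minus_commute)
  then have "size_reduced b i (y - z)"
    unfolding size_reduced_def using eq by (intro exI[of _ "\<lambda>l. c l - of_int (round (c l))"]) auto
  with yz p show ?thesis by blast
qed

lemma norm_le_if_size_reduced:
  assumes "size_reduced b i y"
  shows "norm y \<le> norm (perp (b ` {..<i}) y) + (\<Sum>l<i. norm (b l))"
proof -
  obtain c where c: "y - perp (b ` {..<i}) y = (\<Sum>l<i. c l *\<^sub>R b l)" "\<forall>l<i. \<bar>c l\<bar> \<le> 1/2"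
    using assms unfolding size_reduced_def by blast
  have "norm (y - perp (b ` {..<i}) y) \<le> (\<Sum>l<i. norm (c l *\<^sub>R b l))"
    unfolding c(1) by (rule norm_sum)
  also have "\<dots> \<le> (\<Sum>l<i. norm (b l))"
  proof (rule sum_mono)
    fix l assume "l \<in> {..<i}"
    then have "\<bar>c l\<bar> \<le> 1" using c(2) by fastforce
    then show "norm (c l *\<^sub>R b l) \<le> norm (b l)" by (simp add: mult_left_le_one_le)
  qed
  finally show ?thesis
    using norm_triangle_ineq[of "perp (b ` {..<i}) y" "y - perp (b ` {..<i}) y"] by simp
qed

lemma lattice_not_subset_span:
  fixes b :: "nat \<Rightarrow> real^'n"
  assumes L: "is_lattice L" and i: "i < CARD('n)"
  shows "\<exists>x\<in>L. x \<notin> span (b ` {..<i})"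
proof (rule ccontr)
  assume "\<not> ?thesis"
  then have "L \<subseteq> span (b ` {..<i})" by blast
  then have "UNIV \<subseteq> span (b ` {..<i})"
    using span_minimal[OF _ subspace_span] lattice_span_UNIV[OF L] by blast
  then have "CARD('n) \<le> card (b ` {..<i})"
    using dim_le_card[of UNIV "b ` {..<i}"] by simp
  also have "\<dots> \<le> i" using card_image_le[of "{..<i}" b] by simp
  finally show False using i by simp
qed

text \<open>Size reduction bounds a competitor by its perpendicular part plus \<open>\<Sum>l<i. norm (b l)\<close>,
  so only finitely many lattice vectors need to be compared.\<close>
lemma lattice_perp_minimizer_exists:
  fixes b :: "nat \<Rightarrow> real^'n"
  assumes L: "is_lattice L" and i: "i < CARD('n)" and bL: "\<And>l. l < i \<Longrightarrow> b l \<in> L"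
  shows "\<exists>x\<in>L. x \<notin> span (b ` {..<i}) \<and> size_reduced b i x \<and>
           (\<forall>y\<in>L. y \<notin> span (b ` {..<i}) \<longrightarrow> norm (perp (b ` {..<i}) x) \<le> norm (perp (b ` {..<i}) y))"
proof -
  let ?V = "b ` {..<i}"
  let ?f = "\<lambda>z. norm (perp ?V z)"
  have reduce: "\<exists>y'\<in>L. ?f y' = ?f y \<and> y' \<notin> span ?V \<and> size_reduced b i y'"
    if y: "y \<in> L" "y \<notin> span ?V" for y
  proof -
    obtain y' where "y' \<in> L" "perp ?V y' = perp ?V y" "size_reduced b i y'"
      using size_reduce_exists[of L i b y] L bL y(1) by blast
    moreover from this(2) have "y' \<notin> span ?V" using y(2) by (simp add: perp_eq_0_iff[symmetric])
    ultimately show ?thesis by (metis (no_types))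
  qed
  obtain x1 where x1: "x1 \<in> L" "x1 \<notin> span ?V" using lattice_not_subset_span[OF L i] by blast
  define R where "R = ?f x1"
  define T where "T = {z \<in> L \<inter> cball 0 (R + (\<Sum>l<i. norm (b l))). z \<notin> span ?V \<and> size_reduced b i z}"
  have inT: "z \<in> T" if "z \<in> L" "z \<notin> span ?V" "size_reduced b i z" "?f z \<le> R" for z
    using that norm_le_if_size_reduced[OF that(3)] by (auto simp: T_def)
  obtain x1' where x1': "x1' \<in> L" "?f x1' = R" "x1' \<notin> span ?V" "size_reduced b i x1'"
    using reduce[OF x1] R_def by blast
  have "finite T"
    unfolding T_def using finite_lattice_Int_cball[OF L] by (rule finite_subset[rotated]) auto
  moreover have "T \<noteq> {}" using inT[OF x1'(1,3,4)] x1'(2) by auto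
  ultimately obtain x where x: "x \<in> T" "\<And>z. z \<in> T \<Longrightarrow> ?f x \<le> ?f z"
    using arg_min_if_finite[of T ?f] by (meson not_le)
  have "?f x \<le> ?f y" if y: "y \<in> L" "y \<notin> span ?V" for y
  proof (cases "?f y \<le> R")
    case True
    obtain y' where "y' \<in> L" "?f y' = ?f y" "y' \<notin> span ?V" "size_reduced b i y'"
      using reduce[OF y] by blast
    then show ?thesis using x(2)[OF inT] True by fastforce
  next
    case False
    then show ?thesis using x(2)[OF inT[OF x1'(1,3,4)]] x1'(2) by simp
  qed
  then show ?thesis using x(1) unfolding T_def by blast
qed

lemma kz_reduced_basis_exists:
  fixes L :: "(real^'n) set"
  assumes L: "is_lattice L"
  shows "\<exists>b::nat \<Rightarrow> real^'n. \<forall>j<CARD('n). kz_reduced_at L b j"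
proof -
  have "\<exists>b::nat \<Rightarrow> real^'n. \<forall>j<i. kz_reduced_at L b j" if "i \<le> CARD('n)" for i
    using that
  proof (induction i)
    case (Suc i)
    then obtain b :: "nat \<Rightarrow> real^'n" where b: "\<forall>j<i. kz_reduced_at L b j" by auto
    then have "\<And>l. l < i \<Longrightarrow> b l \<in> L" by (simp add: kz_reduced_at_def)
    then obtain x where "x \<in> L" "x \<notin> span (b ` {..<i})" "size_reduced b i x"
        "\<forall>y\<in>L. y \<notin> span (b ` {..<i}) \<longrightarrow> norm (perp (b ` {..<i}) x) \<le> norm (perp (b ` {..<i}) y)"
      using lattice_perp_minimizer_exists[OF L] Suc.prems by (metis Suc_le_lessD)
    then have "kz_reduced_at L (b(i := x)) i"
      by (simp add: kz_reduced_at_fun_upd)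
    moreover have "kz_reduced_at L (b(i := x)) j" if "j < i" for j
      using b that kz_reduced_at_cong[of j "b(i := x)" b] by simp
    ultimately show ?case using less_Suc_eq by auto
  qed simp
  then show ?thesis by blast
qed

lemma perp_lessThan_Suc:
  obtains \<mu> where "perp (b ` {..<i}) y = \<mu> *\<^sub>R gram_schmidt b i + perp (b ` {..<Suc i}) y"
proof -
  let ?V = "b ` {..<i}" and ?V' = "b ` {..<Suc i}"
  have V': "?V' = insert (b i) ?V" by (simp add: lessThan_Suc)
  obtain \<mu> where \<mu>: "(y - perp ?V' y) - \<mu> *\<^sub>R b i \<in> span ?V"
    using perp_span[of y ?V'] V' span_breakdown_eq by metis
  have "span ?V \<subseteq> span ?V'" by (rule span_mono) auto
  then have "perp ?V (perp ?V' y) = perp ?V' y"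
    by (intro perp_self perp_orthogonal) auto
  then have "perp ?V y - perp ?V' y - \<mu> *\<^sub>R gram_schmidt b i = 0"
    using \<mu> by (simp add: perp_eq_0_iff[symmetric] perp_diff perp_scaleR gram_schmidt_def)
  then show ?thesis by (intro that[of \<mu>]) (simp add: algebra_simps)
qed

lemma orthogonal_perp_lessThan_Suc_gram_schmidt:
  "orthogonal (perp (b ` {..<Suc i}) y) (gram_schmidt b i)"
proof (rule perp_orthogonal)
  let ?V' = "b ` {..<Suc i}"
  have "span (b ` {..<i}) \<subseteq> span ?V'" by (rule span_mono) auto
  then have "b i - gram_schmidt b i \<in> span ?V'"
    using perp_span unfolding gram_schmidt_def by auto
  moreover have "b i \<in> span ?V'" by (rule span_base) simp
  ultimately show "gram_schmidt b i \<in> span ?V'"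
    using span_diff by force
qed

fun growth_const :: "nat \<Rightarrow> real" where
  "growth_const 0 = 1"
| "growth_const (Suc i) = 1 + 2 * real (Suc i) * growth_const i"

lemma growth_const_ge_1: "1 \<le> growth_const i"
  by (induction i) auto

context
  fixes L :: "(real^'n) set" and b :: "nat \<Rightarrow> real^'n"
  assumes lattice: "is_lattice L" and reduced: "\<And>j. j < CARD('n) \<Longrightarrow> kz_reduced_at L b j"
begin

lemma kz_in_lattice: "j < CARD('n) \<Longrightarrow> b j \<in> L"
  and kz_not_in_span: "j < CARD('n) \<Longrightarrow> b j \<notin> span (b ` {..<j})"
  and kz_minimal: "j < CARD('n) \<Longrightarrow> x \<in> L \<Longrightarrow> x \<notin> span (b ` {..<j}) \<Longrightarrow>
                     norm (gram_schmidt b j) \<le> norm (perp (b ` {..<j}) x)"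
  and kz_size_reduced: "j < CARD('n) \<Longrightarrow> size_reduced b j (b j)"
  using reduced[of j] unfolding kz_reduced_at_def by auto

lemma kz_gram_schmidt_nonzero: "i < CARD('n) \<Longrightarrow> gram_schmidt b i \<noteq> 0"
  using kz_not_in_span by (simp add: gram_schmidt_def perp_eq_0_iff)

lemma kz_independent: "inj_on b {..<CARD('n)} \<and> independent (b ` {..<CARD('n)})"
  using independent_if_not_in_span_prefix[of 0 "CARD('n)" b] kz_not_in_span
  by (simp add: lessThan_atLeast0)

text \<open>Otherwise subtracting \<open>\<lfloor>t\<rfloor> *\<^sub>R b i\<close> from \<open>x\<close> would give a lattice vector whose
  component orthogonal to \<open>b ` {..<i}\<close> is \<open>frac t *\<^sub>R gram_schmidt b i\<close>, contradicting minimality.\<close>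
lemma kz_coefficient_integer:
  assumes i: "i < CARD('n)" and x: "x \<in> L" and t: "x - t *\<^sub>R b i \<in> span (b ` {..<i})"
  shows "t \<in> \<int>"
proof (rule ccontr)
  assume "t \<notin> \<int>"
  then have fr: "0 < frac t" "frac t < 1"
    using frac_ge_0[of t] frac_lt_1[of t] frac_eq_0_iff[of t] by linarith+
  let ?V = "b ` {..<i}" and ?s = "gram_schmidt b i" and ?x' = "x - of_int \<lfloor>t\<rfloor> *\<^sub>R b i"
  have "perp ?V x = t *\<^sub>R ?s"
    using t by (simp add: perp_eq_0_iff[symmetric] perp_diff perp_scaleR gram_schmidt_def)
  then have px': "perp ?V ?x' = frac t *\<^sub>R ?s"
    by (simp add: perp_diff perp_scaleR gram_schmidt_def frac_def scaleR_diff_left)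
  have "?x' \<in> L"
    using lattice_diff[OF lattice x lattice_of_int_scaleR[OF lattice kz_in_lattice[OF i]]] .
  moreover have "?x' \<notin> span ?V"
    using px' fr kz_gram_schmidt_nonzero[OF i] by (simp add: perp_eq_0_iff[symmetric])
  ultimately have "norm ?s \<le> norm (perp ?V ?x')" by (rule kz_minimal[OF i])
  also have "\<dots> = frac t * norm ?s" using px' fr by simp
  finally show False
    using fr kz_gram_schmidt_nonzero[OF i] by (simp add: mult_le_cancel_right1)
qed

lemma kz_lattice_int_span:
  assumes "i \<le> CARD('n)" "x \<in> L" "x \<in> span (b ` {..<i})"
  shows "\<exists>c. x = (\<Sum>l<i. of_int (c l) *\<^sub>R b l)"
  using assms
proof (induction i arbitrary: x)
  case (Suc i)
  have i: "i < CARD('n)" using Suc.prems by simp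
  have "b ` {..<Suc i} = insert (b i) (b ` {..<i})" by (simp add: lessThan_Suc)
  then obtain t where t: "x - t *\<^sub>R b i \<in> span (b ` {..<i})"
    using Suc.prems(3) span_breakdown_eq by metis
  then obtain k where k: "t = of_int k"
    using kz_coefficient_integer[OF i Suc.prems(2)] Ints_cases by metis
  have "x - of_int k *\<^sub>R b i \<in> L"
    using lattice_diff[OF lattice Suc.prems(2) lattice_of_int_scaleR[OF lattice kz_in_lattice[OF i]]] .
  then obtain c where c: "x - of_int k *\<^sub>R b i = (\<Sum>l<i. of_int (c l) *\<^sub>R b l)"
    using Suc.IH Suc.prems t k by auto
  have "(\<Sum>l<i. of_int ((c(i := k)) l) *\<^sub>R b l) = (\<Sum>l<i. of_int (c l) *\<^sub>R b l)"
    by (rule sum.cong) auto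
  then have "x = (\<Sum>l<Suc i. of_int ((c(i := k)) l) *\<^sub>R b l)"
    using c by (simp add: algebra_simps)
  then show ?case by blast
qed simp

lemma kz_lattice_basis: "lattice_basis L b"
proof -
  have "span (b ` {..<CARD('n)}) = UNIV"
    using span_image_lessThan_eq_UNIV kz_independent by blast
  then have "L \<subseteq> {(\<Sum>j<CARD('n). of_int (c j) *\<^sub>R b j) | c. True}"
    using kz_lattice_int_span[of "CARD('n)"] by blast
  moreover have "{(\<Sum>j<CARD('n). of_int (c j) *\<^sub>R b j) | c. True} \<subseteq> L"
    using lattice_sum_of_int[OF lattice] kz_in_lattice by auto
  ultimately show ?thesis unfolding lattice_basis_def using kz_independent by blast
qed

lemma kz_first_shortest: "x \<in> L \<Longrightarrow> x \<noteq> 0 \<Longrightarrow> norm (b 0) \<le> norm x"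
proof -
  have "perp {} z = z" for z :: "real^'n" by (rule perp_self) (simp add: orthogonal_def)
  then show "x \<in> L \<Longrightarrow> x \<noteq> 0 \<Longrightarrow> norm (b 0) \<le> norm x"
    using kz_minimal[of 0 x] by (simp add: gram_schmidt_def)
qed

lemma kz_norm_le_gram_schmidt_add_sum:
  "j < CARD('n) \<Longrightarrow> norm (b j) \<le> norm (gram_schmidt b j) + (\<Sum>l<j. norm (b l))"
  using norm_le_if_size_reduced[OF kz_size_reduced] by (simp add: gram_schmidt_def)

text \<open>The lattice vector \<open>x = b (Suc i) - k *\<^sub>R b i\<close>, with \<open>k\<close> rounding the coefficient of
  \<open>gram_schmidt b i\<close>, has perpendicular part \<open>s' + (\<mu> - k) *\<^sub>R s\<close> with \<open>s' \<bottom> s\<close> and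
  \<open>\<bar>\<mu> - k\<bar> \<le> 1/2\<close>; minimality of \<open>s\<close> gives \<open>\<parallel>s\<parallel>\<^sup>2 \<le> \<parallel>s'\<parallel>\<^sup>2 + \<parallel>s\<parallel>\<^sup>2/4\<close>.\<close>
lemma kz_gram_schmidt_le_double_next:
  assumes i: "Suc i < CARD('n)"
  shows "norm (gram_schmidt b i) \<le> 2 * norm (gram_schmidt b (Suc i))"
proof -
  let ?V = "b ` {..<i}" and ?s = "gram_schmidt b i" and ?s' = "gram_schmidt b (Suc i)"
  obtain \<mu> where \<mu>: "perp ?V (b (Suc i)) = \<mu> *\<^sub>R ?s + ?s'"
    using perp_lessThan_Suc[of b i "b (Suc i)"] unfolding gram_schmidt_def by metis
  define d where "d = \<mu> - of_int (round \<mu>)"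
  define x where "x = b (Suc i) - of_int (round \<mu>) *\<^sub>R b i"
  have d: "d\<^sup>2 \<le> 1/4"
    using of_int_round_abs_le[of \<mu>] abs_le_square_iff[of d "1/2"]
    by (simp add: d_def abs_minus_commute power2_eq_square)
  have "x \<in> L"
    unfolding x_def using i by (intro lattice_diff[OF lattice] lattice_of_int_scaleR[OF lattice] kz_in_lattice) auto
  have px: "perp ?V x = ?s' + d *\<^sub>R ?s"
    unfolding x_def d_def by (simp add: perp_diff perp_scaleR \<mu> gram_schmidt_def algebra_simps)
  have "orthogonal ?s' (d *\<^sub>R ?s)"
    using orthogonal_perp_lessThan_Suc_gram_schmidt[of b i "b (Suc i)"]
    by (simp add: gram_schmidt_def orthogonal_clauses)
  then have pyth: "(norm (perp ?V x))\<^sup>2 = (norm ?s')\<^sup>2 + d\<^sup>2 * (norm ?s)\<^sup>2"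
    unfolding px by (simp add: norm_add_Pythagorean power_mult_distrib)
  have "0 < (norm ?s')\<^sup>2" using kz_gram_schmidt_nonzero[OF i] by simp
  then have "0 < (norm (perp ?V x))\<^sup>2" unfolding pyth by (simp add: add_pos_nonneg)
  then have "x \<notin> span ?V" by (auto simp: perp_eq_0_iff[symmetric])
  then have "norm ?s \<le> norm (perp ?V x)" using kz_minimal \<open>x \<in> L\<close> i by simp
  then have "(norm ?s)\<^sup>2 \<le> (norm ?s')\<^sup>2 + d\<^sup>2 * (norm ?s)\<^sup>2"
    unfolding pyth[symmetric] by (simp add: power_mono)
  also have "\<dots> \<le> (norm ?s')\<^sup>2 + (norm ?s)\<^sup>2 / 4"
    using mult_right_mono[OF d, of "(norm ?s)\<^sup>2"] by simp
  finally have "(norm ?s)\<^sup>2 \<le> 4 * (norm ?s')\<^sup>2"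
    using zero_le_power2[of "norm ?s'"] by linarith
  then have "(norm ?s)\<^sup>2 \<le> (2 * norm ?s')\<^sup>2" by (simp add: power_mult_distrib)
  then show ?thesis by (rule power2_le_imp_le) simp
qed

lemma kz_norm_le_growth_const:
  "i < CARD('n) \<Longrightarrow> j \<le> i \<Longrightarrow> norm (b j) \<le> growth_const i * norm (gram_schmidt b i)"
proof (induction i arbitrary: j)
  case 0
  then show ?case using kz_norm_le_gram_schmidt_add_sum[of 0] by simp
next
  case (Suc i)
  let ?g = "norm (gram_schmidt b (Suc i))"
  have prev: "norm (b l) \<le> 2 * growth_const i * ?g" if "l \<le> i" for l
  proof -
    have "norm (b l) \<le> growth_const i * norm (gram_schmidt b i)"
      using Suc.IH[OF _ that] Suc.prems by simp
    also have "\<dots> \<le> growth_const i * (2 * ?g)"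
      using kz_gram_schmidt_le_double_next[OF Suc.prems(1)] growth_const_ge_1[of i]
      by (intro mult_left_mono) auto
    finally show ?thesis by simp
  qed
  show ?case
  proof (cases "j \<le> i")
    case True
    have "2 * growth_const i \<le> growth_const (Suc i)"
      using growth_const_ge_1[of i] by (simp add: algebra_simps)
    then show ?thesis
      using prev[OF True] mult_right_mono[of _ _ ?g] by (meson norm_ge_zero order_trans)
  next
    case False
    then have j: "j = Suc i" using Suc.prems by simp
    have "(\<Sum>l<Suc i. norm (b l)) \<le> real (Suc i) * (2 * growth_const i * ?g)"
      using sum_mono[of "{..<Suc i}" "\<lambda>l. norm (b l)" "\<lambda>_. 2 * growth_const i * ?g"] prev by simp
    then have "norm (b (Suc i)) \<le> ?g + real (Suc i) * (2 * growth_const i * ?g)"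
      using kz_norm_le_gram_schmidt_add_sum[OF Suc.prems(1)] by linarith
    also have "\<dots> = growth_const (Suc i) * ?g" by (simp add: algebra_simps)
    finally show ?thesis using j by simp
  qed
qed

lemma kz_norm_le_growth_const_diff:
  assumes "i < CARD('n)" "j \<le> i" "v \<in> span (b ` {..<i})"
  shows "norm (b j) \<le> growth_const i * norm (b i - v)"
proof -
  have "norm (gram_schmidt b i) \<le> norm (b i - v)"
    using norm_perp_le[of "b ` {..<i}" "b i - v"] perp_diff_span[OF assms(3)]
    by (simp add: gram_schmidt_def)
  then show ?thesis
    using kz_norm_le_growth_const[OF assms(1,2)] growth_const_ge_1[of i]
    by (meson mult_left_mono order_trans zero_le_one order.trans)
qed

lemma kz_inner_last_gram_schmidt:
  assumes y: "y \<in> L"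
  shows "\<exists>k::int. inner y (gram_schmidt b (CARD('n) - 1)) = of_int k * (norm (gram_schmidt b (CARD('n) - 1)))\<^sup>2"
proof -
  define N where "N = CARD('n) - 1"
  have nN: "CARD('n) = Suc N" unfolding N_def by simp
  let ?V = "b ` {..<N}" and ?s = "gram_schmidt b N"
  have orth: "inner w ?s = 0" if "w \<in> span ?V" for w
    using perp_orthogonal[OF that, of "b N"] by (simp add: gram_schmidt_def orthogonal_def inner_commute)
  have bN: "inner (b N) ?s = (norm ?s)\<^sup>2"
    using orth[OF perp_span[of "b N" ?V]] by (simp add: gram_schmidt_def inner_diff_left power2_norm_eq_inner)
  obtain c where c: "y = (\<Sum>l<CARD('n). of_int (c l) *\<^sub>R b l)"
    using y kz_lattice_basis unfolding lattice_basis_def by auto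
  have "(\<Sum>l<N. of_int (c l) * inner (b l) ?s) = 0"
    by (rule sum.neutral) (auto intro!: orth span_base)
  then have "inner y ?s = of_int (c N) * (norm ?s)\<^sup>2"
    unfolding c nN bN[symmetric] by (simp add: inner_add_left inner_sum_left)
  then show ?thesis unfolding N_def by blast
qed

text \<open>The point \<open>s / 2\<close>, with \<open>s\<close> the last Gram--Schmidt vector, stays at distance at least
  \<open>\<parallel>s\<parallel> / 2\<close> from the lattice.\<close>
lemma kz_last_gram_schmidt_le_diameter:
  assumes D: "\<And>x y. torus_dist L x y \<le> D"
  shows "norm (gram_schmidt b (CARD('n) - 1)) \<le> 2 * D"
proof -
  let ?s = "gram_schmidt b (CARD('n) - 1)"
  have far: "norm ?s / 2 \<le> dist ((1/2) *\<^sub>R ?s) y" if y: "y \<in> L" for y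
  proof (cases "?s = 0")
    case False
    obtain k :: int where k: "inner y ?s = of_int k * (norm ?s)\<^sup>2"
      using kz_inner_last_gram_schmidt[OF y] by blast
    have "1/2 \<le> \<bar>1/2 - (of_int k :: real)\<bar>" by (cases "k \<le> 0") auto
    then have "(1/2) * (norm ?s)\<^sup>2 \<le> \<bar>1/2 - (of_int k :: real)\<bar> * (norm ?s)\<^sup>2"
      by (rule mult_right_mono) simp
    also have "\<dots> = \<bar>(1/2 - of_int k) * (norm ?s)\<^sup>2\<bar>" by (simp add: abs_mult)
    also have "\<dots> = \<bar>inner ((1/2) *\<^sub>R ?s - y) ?s\<bar>"
      using k by (simp add: inner_diff_left power2_norm_eq_inner algebra_simps)
    also have "\<dots> \<le> norm ((1/2) *\<^sub>R ?s - y) * norm ?s" by (rule Cauchy_Schwarz_ineq2)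
    finally have "(1/2) * (norm ?s * norm ?s) \<le> norm ((1/2) *\<^sub>R ?s - y) * norm ?s"
      by (simp add: power2_eq_square)
    then show ?thesis using False by (simp add: dist_norm)
  qed simp
  have "L \<noteq> {}" using lattice_zero[OF lattice] by auto
  then have "norm ?s / 2 \<le> infdist ((1/2) *\<^sub>R ?s) L"
    unfolding infdist_notempty[OF \<open>L \<noteq> {}\<close>] using far by (intro cINF_greatest) auto
  also have "\<dots> \<le> D" using D[of "(1/2) *\<^sub>R ?s" 0] by (simp add: torus_dist_def)
  finally show ?thesis by simp
qed

lemma kz_norm_le_diameter:
  assumes D: "\<And>x y. torus_dist L x y \<le> D" and j: "j < CARD('n)"
  shows "norm (b j) \<le> growth_const (CARD('n) - 1) * (2 * D)"
proof -
  have "norm (b j) \<le> growth_const (CARD('n) - 1) * norm (gram_schmidt b (CARD('n) - 1))"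
    using kz_norm_le_growth_const[of "CARD('n) - 1" j] j by simp
  also have "\<dots> \<le> growth_const (CARD('n) - 1) * (2 * D)"
    using kz_last_gram_schmidt_le_diameter[OF D] growth_const_ge_1[of "CARD('n) - 1"]
    by (intro mult_left_mono) auto
  finally show ?thesis .
qed

end

section \<open>Covolume\<close>

definition basis_coord :: "(nat \<Rightarrow> real^'n) \<Rightarrow> real^'n \<Rightarrow> nat \<Rightarrow> real" where
  "basis_coord b x j = representation (b ` {..<CARD('n)}) x (b j)"

definition fundamental_parallelepiped :: "(nat \<Rightarrow> real^'n) \<Rightarrow> (real^'n) set" where
  "fundamental_parallelepiped b =
     {(\<Sum>j<CARD('n). t j *\<^sub>R b j) | t. \<forall>j<CARD('n). 0 \<le> t j \<and> t j < 1}"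

context
  fixes b :: "nat \<Rightarrow> real^'n"
  assumes inj: "inj_on b {..<CARD('n)}" and indep: "independent (b ` {..<CARD('n)})"
begin

lemma sum_basis_coord: "(\<Sum>j<CARD('n). basis_coord b x j *\<^sub>R b j) = x"
proof -
  have "(\<Sum>v\<in>b ` {..<CARD('n)}. representation (b ` {..<CARD('n)}) x v *\<^sub>R v) = x"
    using span_image_lessThan_eq_UNIV[OF inj indep] by (intro sum_representation_eq indep) auto
  then show ?thesis by (simp add: sum.reindex[OF inj] basis_coord_def)
qed

lemma basis_coord_sum:
  assumes i: "i < CARD('n)"
  shows "basis_coord b (\<Sum>j<CARD('n). t j *\<^sub>R b j) i = t i"
proof -
  let ?B = "b ` {..<CARD('n)}"
  have sp: "t j *\<^sub>R b j \<in> span ?B" if "j \<in> {..<CARD('n)}" for j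
    using that by (intro span_mul span_base) auto
  have "basis_coord b (\<Sum>j<CARD('n). t j *\<^sub>R b j) i = (\<Sum>j<CARD('n). representation ?B (t j *\<^sub>R b j) (b i))"
    unfolding basis_coord_def
    using representation_sum[OF indep, of "{..<CARD('n)}" "\<lambda>j. t j *\<^sub>R b j", OF sp] by simp
  also have "\<dots> = (\<Sum>j<CARD('n). t j * (if b j = b i then 1 else 0))"
    by (intro sum.cong) (auto simp: representation_scale[OF indep] representation_basis[OF indep] span_base)
  also have "\<dots> = (\<Sum>j\<in>{i}. t j)"
    using inj i by (intro sum.mono_neutral_cong_right) (auto dest: inj_onD)
  finally show ?thesis by simp
qed

lemma bounded_linear_basis_coord: "bounded_linear (\<lambda>x. basis_coord b x j)"
  unfolding basis_coord_def
  by (rule bounded_linear_representation[OF indep span_image_lessThan_eq_UNIV[OF inj indep]])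

lemma fundamental_parallelepiped_eq:
  "fundamental_parallelepiped b = {x. \<forall>j<CARD('n). 0 \<le> basis_coord b x j \<and> basis_coord b x j < 1}"
proof (intro set_eqI iffI)
  fix x assume "x \<in> fundamental_parallelepiped b"
  then obtain t where "x = (\<Sum>j<CARD('n). t j *\<^sub>R b j)" "\<forall>j<CARD('n). 0 \<le> t j \<and> t j < 1"
    unfolding fundamental_parallelepiped_def by blast
  then show "x \<in> {x. \<forall>j<CARD('n). 0 \<le> basis_coord b x j \<and> basis_coord b x j < 1}"
    by (simp add: basis_coord_sum)
next
  fix x assume "x \<in> {x. \<forall>j<CARD('n). 0 \<le> basis_coord b x j \<and> basis_coord b x j < 1}"
  then show "x \<in> fundamental_parallelepiped b"
    unfolding fundamental_parallelepiped_def using sum_basis_coord[of x]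
    by (intro CollectI exI[of _ "basis_coord b x"]) simp
qed

lemma norm_le_if_in_fundamental_parallelepiped:
  assumes "p \<in> fundamental_parallelepiped b"
  shows "norm p \<le> (\<Sum>j<CARD('n). norm (b j))"
proof -
  obtain t where t: "p = (\<Sum>j<CARD('n). t j *\<^sub>R b j)" "\<forall>j<CARD('n). 0 \<le> t j \<and> t j < 1"
    using assms unfolding fundamental_parallelepiped_def by blast
  have "norm p \<le> (\<Sum>j<CARD('n). norm (t j *\<^sub>R b j))" unfolding t(1) by (rule norm_sum)
  also have "\<dots> \<le> (\<Sum>j<CARD('n). norm (b j))"
  proof (rule sum_mono)
    fix j assume "j \<in> {..<CARD('n)}"
    then have "\<bar>t j\<bar> \<le> 1" using t(2) by fastforce
    then show "norm (t j *\<^sub>R b j) \<le> norm (b j)" by (simp add: mult_left_le_one_le)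
  qed
  finally show ?thesis .
qed

lemma fundamental_parallelepiped_lmeasurable: "fundamental_parallelepiped b \<in> lmeasurable"
proof (rule bounded_set_imp_lmeasurable)
  show "bounded (fundamental_parallelepiped b)"
    using norm_le_if_in_fundamental_parallelepiped unfolding bounded_iff by blast
  have cont: "continuous_on UNIV (\<lambda>x. basis_coord b x j)" for j
    by (rule linear_continuous_on[OF bounded_linear_basis_coord])
  have "{x. 0 \<le> basis_coord b x j} \<in> sets borel" "{x. basis_coord b x j < 1} \<in> sets borel" for j
    using closed_Collect_le[OF continuous_on_const cont] open_Collect_less[OF cont continuous_on_const]
    by (auto intro: borel_closed borel_open)
  then have "(\<Inter>j<CARD('n). {x. 0 \<le> basis_coord b x j} \<inter> {x. basis_coord b x j < 1}) \<in> sets lebesgue"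
    by (intro sets.finite_INT sets_completionI_sets sets.Int) (auto simp: lessThan_empty_iff)
  moreover have "fundamental_parallelepiped b =
      (\<Inter>j<CARD('n). {x. 0 \<le> basis_coord b x j} \<inter> {x. basis_coord b x j < 1})"
    unfolding fundamental_parallelepiped_eq by blast
  ultimately show "fundamental_parallelepiped b \<in> sets lebesgue" by simp
qed

end

lemma lattice_translate_into_fundamental_parallelepiped:
  fixes b :: "nat \<Rightarrow> real^'n"
  assumes B: "lattice_basis L b"
  shows "\<exists>l\<in>L. x - l \<in> fundamental_parallelepiped b"
proof -
  have inj: "inj_on b {..<CARD('n)}" and indep: "independent (b ` {..<CARD('n)})"
    and LZ: "L = {(\<Sum>j<CARD('n). of_int (c j) *\<^sub>R b j) | c. True}"
    using B unfolding lattice_basis_def by auto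
  define t where "t j = basis_coord b x j" for j
  define l where "l = (\<Sum>j<CARD('n). of_int \<lfloor>t j\<rfloor> *\<^sub>R b j)"
  have "l \<in> L" unfolding LZ l_def by (intro CollectI exI[of _ "\<lambda>j. \<lfloor>t j\<rfloor>"]) simp
  have "x - l = (\<Sum>j<CARD('n). (t j - of_int \<lfloor>t j\<rfloor>) *\<^sub>R b j)"
    unfolding l_def t_def using sum_basis_coord[OF inj indep, of x]
    by (simp add: sum_subtractf scaleR_diff_left)
  moreover have "\<forall>j. 0 \<le> t j - of_int \<lfloor>t j\<rfloor> \<and> t j - of_int \<lfloor>t j\<rfloor> < 1" by linarith
  ultimately have "x - l \<in> fundamental_parallelepiped b"
    unfolding fundamental_parallelepiped_def by (intro CollectI exI[of _ "\<lambda>j. t j - of_int \<lfloor>t j\<rfloor>"]) auto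
  with \<open>l \<in> L\<close> show ?thesis by blast
qed

lemma lattice_translates_ball_disjoint:
  assumes L: "is_lattice L" and sep: "\<And>x. x \<in> L \<Longrightarrow> x \<noteq> 0 \<Longrightarrow> \<delta> \<le> norm x"
    and l: "l \<in> L" "l' \<in> L" "l \<noteq> l'"
  shows "disjnt ((\<lambda>x. x - l) ` ball 0 (\<delta>/2)) ((\<lambda>x. x - l') ` ball 0 (\<delta>/2))"
proof (rule ccontr)
  assume "\<not> ?thesis"
  then obtain x x' where x: "x \<in> ball 0 (\<delta>/2)" "x' \<in> ball 0 (\<delta>/2)" "x - l = x' - l'"
    unfolding disjnt_def by auto
  then have "l - l' = x - x'" by (simp add: algebra_simps)
  then have "norm (l - l') < \<delta>"
    using x norm_triangle_ineq4[of x x'] by simp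
  moreover have "\<delta> \<le> norm (l - l')"
    using l lattice_diff[OF L] sep by simp
  ultimately show False by simp
qed

text \<open>Cut the ball along the lattice translates of the fundamental parallelepiped and move the
  pieces back into it; they do not overlap, since the lattice translates of the ball are pairwise
  disjoint.\<close>
lemma measure_ball_le_fundamental_parallelepiped:
  fixes b :: "nat \<Rightarrow> real^'n"
  assumes L: "is_lattice L" and B: "lattice_basis L b"
    and sep: "\<And>x. x \<in> L \<Longrightarrow> x \<noteq> 0 \<Longrightarrow> \<delta> \<le> norm x"
  shows "measure lebesgue (ball (0::real^'n) (\<delta>/2)) \<le> measure lebesgue (fundamental_parallelepiped b)"
proof -
  let ?A = "ball (0::real^'n) (\<delta>/2)" and ?P = "fundamental_parallelepiped b"
  have P: "?P \<in> lmeasurable"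
    using B fundamental_parallelepiped_lmeasurable by (auto simp: lattice_basis_def)
  define C where "C l = ?P \<inter> (\<lambda>x. x - l) ` ?A" for l
  define F where "F = {l \<in> L. C l \<noteq> {}}"
  have C: "C l \<in> lmeasurable" for l
    unfolding C_def using P by (intro fmeasurable_Int_fmeasurable fmeasurableD measurable_translation_subtract) auto
  have "F \<subseteq> L \<inter> cball 0 (\<delta>/2 + (\<Sum>j<CARD('n). norm (b j)))"
  proof
    fix l assume "l \<in> F"
    then obtain x where x: "l \<in> L" "x \<in> ?A" "x - l \<in> ?P" unfolding F_def C_def by auto
    have "norm l \<le> norm x + norm (x - l)" using norm_triangle_ineq4[of x "x - l"] by simp
    moreover have "norm (x - l) \<le> (\<Sum>j<CARD('n). norm (b j))"
      using x(3) B norm_le_if_in_fundamental_parallelepiped by (auto simp: lattice_basis_def)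
    ultimately show "l \<in> L \<inter> cball 0 (\<delta>/2 + (\<Sum>j<CARD('n). norm (b j)))" using x(1,2) by simp
  qed
  then have fin: "finite F" using finite_lattice_Int_cball[OF L] by (rule finite_subset)
  have cover: "?A \<subseteq> (\<Union>l\<in>F. (+) l ` C l)"
  proof
    fix x assume x: "x \<in> ?A"
    obtain l where "l \<in> L" "x - l \<in> ?P"
      using lattice_translate_into_fundamental_parallelepiped[OF B] by blast
    moreover have "x - l \<in> (\<lambda>y. y - l) ` ?A" using x by blast
    ultimately have "l \<in> F" "x - l \<in> C l" unfolding F_def C_def by auto
    then show "x \<in> (\<Union>l\<in>F. (+) l ` C l)" by force
  qed
  have disjoint: "pairwise (\<lambda>l l'. disjnt (C l) (C l')) F"
    using lattice_translates_ball_disjoint[OF L sep] unfolding F_def C_def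
    by (auto simp: pairwise_def disjnt_def)
  have "measure lebesgue ?A \<le> measure lebesgue (\<Union>l\<in>F. (+) l ` C l)"
    using cover by (intro measure_mono_fmeasurable fmeasurable.finite_UN fin measurable_translation C) auto
  also have "\<dots> \<le> (\<Sum>l\<in>F. measure lebesgue ((+) l ` C l))"
    using C by (intro measure_UNION_le fin fmeasurableD measurable_translation)
  also have "\<dots> = measure lebesgue (\<Union>l\<in>F. C l)"
    using C disjoint by (simp add: measure_translation measure_UNION' fin)
  also have "\<dots> \<le> measure lebesgue ?P"
    using P C by (intro measure_mono_fmeasurable fmeasurableD fmeasurable.finite_UN fin) (auto simp: C_def)
  finally show ?thesis .
qed

lemma measure_ball_le_torus_volume:
  fixes L :: "(real^'n) set"
  assumes L: "is_lattice L" and sep: "\<And>x. x \<in> L \<Longrightarrow> x \<noteq> 0 \<Longrightarrow> \<delta> \<le> norm x"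
  shows "measure lebesgue (ball (0::real^'n) (\<delta>/2)) \<le> torus_volume L"
proof -
  obtain b :: "nat \<Rightarrow> real^'n" where "\<forall>j<CARD('n). kz_reduced_at L b j"
    using kz_reduced_basis_exists[OF L] by blast
  then have "lattice_basis L b" using kz_lattice_basis[OF L] by blast
  then have "lattice_basis L (SOME b. lattice_basis L b)" by (rule someI[of "lattice_basis L"])
  from measure_ball_le_fundamental_parallelepiped[OF L this sep] show ?thesis
    by (simp add: torus_volume_def fundamental_parallelepiped_def)
qed

section \<open>Limits of reduced bases\<close>

lemma bounded_family_convergent_subseq:
  fixes f :: "nat \<Rightarrow> nat \<Rightarrow> 'a::heine_borel"
  assumes "\<And>j. j < N \<Longrightarrow> bounded (range (\<lambda>k. f k j))"
  shows "\<exists>r \<beta>. strict_mono r \<and> (\<forall>j<N. (\<lambda>k. f (r k) j) \<longlonglongrightarrow> \<beta> j)"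
  using assms
proof (induction N)
  case 0
  show ?case using strict_mono_id by blast
next
  case (Suc N)
  have "\<And>j. j < N \<Longrightarrow> bounded (range (\<lambda>k. f k j))" using Suc.prems by simp
  then obtain r \<beta> where r: "strict_mono r" "\<forall>j<N. (\<lambda>k. f (r k) j) \<longlonglongrightarrow> \<beta> j"
    using Suc.IH by blast
  have "bounded (range (\<lambda>k. f (r k) N))"
    using Suc.prems[of N] by (rule bounded_subset) auto
  then obtain l r' where r': "strict_mono r'" "((\<lambda>k. f (r k) N) \<circ> r') \<longlonglongrightarrow> l"
    using bounded_imp_convergent_subsequence by blast
  have "(\<lambda>k. f (r (r' k)) j) \<longlonglongrightarrow> (\<beta>(N := l)) j" if "j < Suc N" for j
  proof (cases "j = N")
    case False
    then show ?thesis
      using LIMSEQ_subseq_LIMSEQ[of "\<lambda>k. f (r k) j" "\<beta> j" r'] r r'(1) that by (simp add: o_def)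
  qed (use r'(2) in \<open>simp add: o_def\<close>)
  then show ?case using strict_mono_o[OF r(1) r'(1)] unfolding o_def by blast
qed

lemma lattice_basis_reindex:
  fixes b :: "nat \<Rightarrow> real^'n"
  assumes \<sigma>: "bij_betw \<sigma> {..<CARD('n)} {..<CARD('n)}" and B: "lattice_basis L b"
  shows "lattice_basis L (b \<circ> \<sigma>)"
proof -
  let ?I = "{..<CARD('n)}"
  have im: "(b \<circ> \<sigma>) ` ?I = b ` ?I"
    using bij_betw_imp_surj_on[OF \<sigma>] image_comp[of b \<sigma> ?I] by simp
  have "inj_on (b \<circ> \<sigma>) ?I"
    using B bij_betw_imp_inj_on[OF \<sigma>] bij_betw_imp_surj_on[OF \<sigma>]
    by (auto simp: lattice_basis_def intro: comp_inj_on)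
  moreover have sum_\<sigma>: "(\<Sum>j\<in>?I. g (\<sigma> j)) = (\<Sum>j\<in>?I. g j)" for g :: "nat \<Rightarrow> real^'n"
    using sum.reindex_bij_betw[OF \<sigma>] .
  have "{(\<Sum>j<CARD('n). of_int (c j) *\<^sub>R b j) | c. True}
      = {(\<Sum>j<CARD('n). of_int (c j) *\<^sub>R (b \<circ> \<sigma>) j) | c. True}"
  proof (intro set_eqI iffI)
    fix x assume "x \<in> {(\<Sum>j<CARD('n). of_int (c j) *\<^sub>R b j) | c. True}"
    then obtain c where "x = (\<Sum>j<CARD('n). of_int (c j) *\<^sub>R b j)" by blast
    then have "x = (\<Sum>j<CARD('n). of_int (c (\<sigma> j)) *\<^sub>R (b \<circ> \<sigma>) j)"
      using sum_\<sigma>[of "\<lambda>j. of_int (c j) *\<^sub>R b j"] by simp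
    then show "x \<in> {(\<Sum>j<CARD('n). of_int (c j) *\<^sub>R (b \<circ> \<sigma>) j) | c. True}"
      by (intro CollectI exI[of _ "c \<circ> \<sigma>"]) simp
  next
    fix x assume "x \<in> {(\<Sum>j<CARD('n). of_int (c j) *\<^sub>R (b \<circ> \<sigma>) j) | c. True}"
    then obtain c where x: "x = (\<Sum>j<CARD('n). of_int (c j) *\<^sub>R (b \<circ> \<sigma>) j)" by blast
    define c' where "c' = c \<circ> inv_into ?I \<sigma>"
    have "(\<Sum>j<CARD('n). of_int (c' (\<sigma> j)) *\<^sub>R b (\<sigma> j)) = x"
      unfolding x c'_def using bij_betw_inv_into_left[OF \<sigma>] by (intro sum.cong) auto
    then have "x = (\<Sum>j<CARD('n). of_int (c' j) *\<^sub>R b j)"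
      using sum_\<sigma>[of "\<lambda>j. of_int (c' j) *\<^sub>R b j"] by simp
    then show "x \<in> {(\<Sum>j<CARD('n). of_int (c j) *\<^sub>R b j) | c. True}"
      by (intro CollectI exI[of _ c']) simp
  qed
  ultimately show ?thesis using B im by (simp add: lattice_basis_def)
qed

lemma bij_betw_reverse_lessThan:
  fixes m n :: nat
  assumes "m \<le> n"
  shows "bij_betw (\<lambda>j. n - Suc j) {..<n - m} {m..<n}"
proof (rule bij_betw_imageI)
  show "inj_on (\<lambda>j. n - Suc j) {..<n - m}" by (rule inj_onI) auto
  show "(\<lambda>j. n - Suc j) ` {..<n - m} = {m..<n}"
  proof
    show "{m..<n} \<subseteq> (\<lambda>j. n - Suc j) ` {..<n - m}"
    proof
      fix i assume "i \<in> {m..<n}"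
      then have "i = n - Suc (n - Suc i)" "n - Suc i \<in> {..<n - m}" by auto
      then show "i \<in> (\<lambda>j. n - Suc j) ` {..<n - m}" by blast
    qed
  qed (use assms in auto)
qed

locale kz_limit =
  fixes L :: "nat \<Rightarrow> (real^'n) set" and c :: "nat \<Rightarrow> nat \<Rightarrow> real^'n" and \<beta> :: "nat \<Rightarrow> real^'n"
  assumes lattice: "\<And>k. is_lattice (L k)"
    and reduced: "\<And>k j. j < CARD('n) \<Longrightarrow> kz_reduced_at (L k) (c k) j"
    and converges: "\<And>j. j < CARD('n) \<Longrightarrow> (\<lambda>k. c k j) \<longlonglongrightarrow> \<beta> j"
begin

lemma limit_in_span_prefix_imp_zero:
  assumes i: "i < CARD('n)" and sp: "\<beta> i \<in> span (\<beta> ` {..<i})" and j: "j \<le> i"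
  shows "\<beta> j = 0"
proof -
  obtain t where t: "\<beta> i = (\<Sum>l<i. t l *\<^sub>R \<beta> l)"
    using span_image_lessThan_obtain_sum[OF sp] by blast
  define x where "x k = c k i - (\<Sum>l<i. t l *\<^sub>R c k l)" for k
  have "x \<longlonglongrightarrow> \<beta> i - (\<Sum>l<i. t l *\<^sub>R \<beta> l)"
    unfolding x_def using i by (intro tendsto_intros converges) auto
  then have lim: "(\<lambda>k. growth_const i * norm (x k)) \<longlonglongrightarrow> 0"
    using t tendsto_mult_right_zero tendsto_norm_zero by force
  have "\<forall>k. norm (c k j) \<le> growth_const i * norm (x k)"
    unfolding x_def using kz_norm_le_growth_const_diff[OF lattice reduced i j sum_scaleR_in_span_image]
    by blast
  from Lim_null_comparison[OF always_eventually[OF this] lim]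
  have "(\<lambda>k. c k j) \<longlonglongrightarrow> 0" .
  moreover have "(\<lambda>k. c k j) \<longlonglongrightarrow> \<beta> j" using converges i j by simp
  ultimately show ?thesis using LIMSEQ_unique by blast
qed

lemma first_limit_zero:
  assumes vol: "(\<lambda>k. torus_volume (L k)) \<longlonglongrightarrow> 0"
  shows "\<beta> 0 = 0"
proof (rule ccontr)
  assume "\<beta> 0 \<noteq> 0"
  define \<delta> where "\<delta> = norm (\<beta> 0) / 2"
  have "0 < \<delta>" unfolding \<delta>_def using \<open>\<beta> 0 \<noteq> 0\<close> by simp
  have "measure lebesgue (ball (0::real^'n) (\<delta>/2)) = measure lborel (ball (0::real^'n) (\<delta>/2))"
    by (rule measure_completion) simp
  then have pos: "0 < measure lebesgue (ball (0::real^'n) (\<delta>/2))"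
    using content_ball_pos[of "\<delta>/2"] \<open>0 < \<delta>\<close> by simp
  have ev1: "\<forall>\<^sub>F k in sequentially. \<delta> < norm (c k 0)"
    using tendsto_norm[OF converges[of 0]] \<open>0 < \<delta>\<close> unfolding \<delta>_def by (intro order_tendstoD(1)) auto
  have ev2: "\<forall>\<^sub>F k in sequentially. torus_volume (L k) < measure lebesgue (ball (0::real^'n) (\<delta>/2))"
    using vol pos by (rule order_tendstoD(2))
  have le: "measure lebesgue (ball (0::real^'n) (\<delta>/2)) \<le> torus_volume (L k)"
    if "\<delta> < norm (c k 0)" for k
    using that kz_first_shortest[OF lattice reduced]
    by (intro measure_ball_le_torus_volume[OF lattice]) force
  from eventually_conj[OF ev1 ev2] have "\<forall>\<^sub>F k in sequentially. False"
    by (rule eventually_mono) (use le in fastforce)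
  then show False by simp
qed

lemma limits_split:
  assumes vol: "(\<lambda>k. torus_volume (L k)) \<longlonglongrightarrow> 0"
  obtains m0 where "1 \<le> m0" "m0 \<le> CARD('n)" "\<And>j. j < m0 \<Longrightarrow> \<beta> j = 0"
    "inj_on \<beta> {m0..<CARD('n)}" "independent (\<beta> ` {m0..<CARD('n)})"
proof -
  let ?n = "CARD('n)"
  define m0 where "m0 = (LEAST j. j = ?n \<or> (j < ?n \<and> \<beta> j \<noteq> 0))"
  have m0: "m0 = ?n \<or> (m0 < ?n \<and> \<beta> m0 \<noteq> 0)"
    unfolding m0_def by (rule LeastI[of _ ?n]) simp
  have "m0 \<le> ?n" unfolding m0_def by (rule Least_le) simp
  have below: "\<beta> j = 0" if "j < m0" for j
    using not_less_Least[OF that[unfolded m0_def]] that \<open>m0 \<le> ?n\<close> by auto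
  have "1 \<le> m0"
    using m0 first_limit_zero[OF vol] by (cases m0) auto
  have "\<beta> j \<notin> span (\<beta> ` {m0..<j})" if "m0 \<le> j" "j < ?n" for j
  proof
    assume "\<beta> j \<in> span (\<beta> ` {m0..<j})"
    moreover have "span (\<beta> ` {m0..<j}) \<subseteq> span (\<beta> ` {..<j})" by (rule span_mono) auto
    ultimately have "\<beta> m0 = 0" using limit_in_span_prefix_imp_zero that by blast
    then show False using m0 that by auto
  qed
  then show ?thesis
    using that[OF \<open>1 \<le> m0\<close> \<open>m0 \<le> ?n\<close> below] independent_if_not_in_span_prefix by blast
qed

lemma reversed_basis_split:
  assumes vol: "(\<lambda>k. torus_volume (L k)) \<longlonglongrightarrow> 0"
  shows "\<exists>m < CARD('n). \<exists>v :: nat \<Rightarrow> nat \<Rightarrow> real^'n.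
           (\<forall>k. lattice_basis (L k) (v k)) \<and>
           (1 \<le> m \<longrightarrow> (\<exists>w. (\<forall>j<m. (\<lambda>k. v k j) \<longlonglongrightarrow> w j) \<and>
                              inj_on w {..<m} \<and> independent (w ` {..<m}))) \<and>
           (\<forall>j. m \<le> j \<and> j < CARD('n) \<longrightarrow> (\<lambda>k. v k j) \<longlonglongrightarrow> 0)"
proof -
  let ?n = "CARD('n)" and ?rev = "\<lambda>j. CARD('n) - Suc j"
  obtain m0 where m0: "1 \<le> m0" "m0 \<le> ?n" "\<And>j. j < m0 \<Longrightarrow> \<beta> j = 0"
    "inj_on \<beta> {m0..<?n}" "independent (\<beta> ` {m0..<?n})"
    using limits_split[OF vol] by blast
  have rev: "bij_betw ?rev {..<?n - m0} {m0..<?n}" by (rule bij_betw_reverse_lessThan[OF m0(2)])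
  define v where "v k = c k \<circ> ?rev" for k
  define w where "w = \<beta> \<circ> ?rev"
  have basis: "\<forall>k. lattice_basis (L k) (v k)"
    using lattice_basis_reindex[OF _ kz_lattice_basis[OF lattice reduced]]
      bij_betw_reverse_lessThan[of 0 ?n] by (simp add: atLeast0LessThan v_def)
  have lim: "(\<lambda>k. v k j) \<longlonglongrightarrow> w j" if "j < ?n" for j
    using converges[of "?rev j"] that by (simp add: v_def w_def)
  have "inj_on w {..<?n - m0}"
    using comp_inj_on[OF bij_betw_imp_inj_on[OF rev]] bij_betw_imp_surj_on[OF rev] m0(4)
    by (simp add: w_def)
  moreover have "w ` {..<?n - m0} = \<beta> ` {m0..<?n}"
    by (simp only: w_def image_comp[symmetric] bij_betw_imp_surj_on[OF rev])
  ultimately have "1 \<le> ?n - m0 \<longrightarrow> (\<exists>w. (\<forall>j<?n - m0. (\<lambda>k. v k j) \<longlonglongrightarrow> w j) \<and>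
                              inj_on w {..<?n - m0} \<and> independent (w ` {..<?n - m0}))"
    using lim m0(5) by (intro impI exI[of _ w]) auto
  moreover have "\<forall>j. ?n - m0 \<le> j \<and> j < ?n \<longrightarrow> (\<lambda>k. v k j) \<longlonglongrightarrow> 0"
  proof (intro allI impI)
    fix j assume j: "?n - m0 \<le> j \<and> j < ?n"
    then have "w j = 0" unfolding w_def o_def by (intro m0(3)) arith
    then show "(\<lambda>k. v k j) \<longlonglongrightarrow> 0" using lim[of j] j by simp
  qed
  moreover have "?n - m0 < ?n" using m0(1,2) by simp
  ultimately show ?thesis
    using basis by (intro exI[of _ "?n - m0"] conjI exI[of _ v]) blast+
qed

end

theorem mainTheorem18:
  fixes L :: "nat \<Rightarrow> (real^'n) set"
  assumes lat: "\<And>k. is_lattice (L k)"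
    and diam: "\<exists>D. \<forall>k x y. torus_dist (L k) x y \<le> D"
    and vol: "(\<lambda>k. torus_volume (L k)) \<longlonglongrightarrow> 0"
  shows "\<exists>r. strict_mono r \<and> (\<exists>m < CARD('n). \<exists>v :: nat \<Rightarrow> nat \<Rightarrow> real^'n.
           (\<forall>k. lattice_basis (L (r k)) (v k)) \<and>
           (1 \<le> m \<longrightarrow> (\<exists>w. (\<forall>j<m. (\<lambda>k. v k j) \<longlonglongrightarrow> w j) \<and>
                              inj_on w {..<m} \<and> independent (w ` {..<m}))) \<and>
           (\<forall>j. m \<le> j \<and> j < CARD('n) \<longrightarrow> (\<lambda>k. v k j) \<longlonglongrightarrow> 0))"
proof -
  obtain D where D: "\<And>k x y. torus_dist (L k) x y \<le> D" using diam by blast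
  define kz where "kz k = (SOME b. \<forall>j<CARD('n). kz_reduced_at (L k) b j)" for k
  have kz: "kz_reduced_at (L k) (kz k) j" if "j < CARD('n)" for k j
    using someI_ex[OF kz_reduced_basis_exists[OF lat[of k]]] that unfolding kz_def by blast
  have "bounded (range (\<lambda>k. kz k j))" if "j < CARD('n)" for j
    using kz_norm_le_diameter[OF lat kz D that] unfolding bounded_iff by blast
  then obtain r \<beta> where r: "strict_mono r" and conv: "\<forall>j<CARD('n). (\<lambda>k. kz (r k) j) \<longlonglongrightarrow> \<beta> j"
    using bounded_family_convergent_subseq by blast
  interpret kz_limit "\<lambda>k. L (r k)" "\<lambda>k. kz (r k)" \<beta>
    using lat kz conv by unfold_locales auto
  have "(\<lambda>k. torus_volume (L (r k))) \<longlonglongrightarrow> 0"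
    using LIMSEQ_subseq_LIMSEQ[OF vol r] by (simp add: o_def)
  then show ?thesis using r reversed_basis_split by blast
qed

end
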